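(* Let $T$ be an extension of $\mathsf{Q}$ which represents a function $g$. Then $T$ represents every (partial) function $f$ that can be computed by an algorithm with oracle access to $g$.
   Context: $\mathsf{Q}$ is the first-order theory with equality in the language $\{0,S,+,\times\}$ axiomatized by: $\forall x\colon \neg\, Sx = 0$; $\forall x,y\colon Sx = Sy \rightarrow x = y$; $\forall x\colon x = 0 \lor \exists y\colon Sy = x$; $\forall x\colon x + 0 = x$; $\forall x,y\colon x + Sy = S(x+y)$; $\forall x\colon x \times 0 = 0$; $\forall x,y\colon x \times Sy = x + (x\times y)$. A theory is a set of sentences closed under logical consequence; an extension of $\mathsf{Q}$ is a theory containing it (possibly in an expanded language). Numerals: $\overline{n} = S\cdots S0$ ($n$ times $S$). A partial function $f\colon\mathbb{N}^k\to\mathbb{N}$ is represented in $T$ if there is a formula $\langle f\rangle(x_1,\dots,x_k,y)$ such that whenever $f(\mathbf{x}) = y$, $T \vdash \exists! y'\colon \langle f\rangle(\overline{\mathbf{x}}, y') \land \langle f\rangle(\overline{\mathbf{x}}, \overline{y})$, where $\exists! y\colon P(y) :\equiv \exists y\colon P(y) \land \forall z\colon P(z) \rightarrow z = y$. *)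

theory Defs
  imports Main
begin

section \<open>First-order syntax (de Bruijn indices), countable signature\<close>

text \<open>Function symbols are pairs (name, arity) with the arity given by the length of the
argument list; likewise relation symbols.  Names 0,1,2,3 of arities 0,1,2,2 are the
symbols 0, S, +, times of arithmetic.\<close>

datatype trm = Var nat | Fn nat "trm list"

datatype fm = Eq trm trm | Rel nat "trm list" | Bot | Imp fm fm | All fm

definition Neg :: "fm \<Rightarrow> fm" where "Neg p = Imp p Bot"
definition Or :: "fm \<Rightarrow> fm \<Rightarrow> fm" where "Or p q = Imp (Neg p) q"
definition And :: "fm \<Rightarrow> fm \<Rightarrow> fm" where "And p q = Neg (Imp p (Neg q))"
definition Ex :: "fm \<Rightarrow> fm" where "Ex p = Neg (All (Neg p))"

fun liftt :: "trm \<Rightarrow> trm" where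
  "liftt (Var i) = Var (Suc i)"
| "liftt (Fn f ts) = Fn f (map liftt ts)"

fun substt :: "(nat \<Rightarrow> trm) \<Rightarrow> trm \<Rightarrow> trm" where
  "substt \<sigma> (Var i) = \<sigma> i"
| "substt \<sigma> (Fn f ts) = Fn f (map (substt \<sigma>) ts)"

fun subst :: "(nat \<Rightarrow> trm) \<Rightarrow> fm \<Rightarrow> fm" where
  "subst \<sigma> (Eq s t) = Eq (substt \<sigma> s) (substt \<sigma> t)"
| "subst \<sigma> (Rel r ts) = Rel r (map (substt \<sigma>) ts)"
| "subst \<sigma> Bot = Bot"
| "subst \<sigma> (Imp p q) = Imp (subst \<sigma> p) (subst \<sigma> q)"
| "subst \<sigma> (All p) = All (subst (\<lambda>i. case i of 0 \<Rightarrow> Var 0 | Suc j \<Rightarrow> liftt (\<sigma> j)) p)"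

fun fvt :: "trm \<Rightarrow> nat set" where
  "fvt (Var i) = {i}"
| "fvt (Fn f ts) = (\<Union>t\<in>set ts. fvt t)"

fun fv :: "fm \<Rightarrow> nat set" where
  "fv (Eq s t) = fvt s \<union> fvt t"
| "fv (Rel r ts) = (\<Union>t\<in>set ts. fvt t)"
| "fv Bot = {}"
| "fv (Imp p q) = fv p \<union> fv q"
| "fv (All p) = {i. Suc i \<in> fv p}"

definition sentence :: "fm \<Rightarrow> bool" where "sentence p \<longleftrightarrow> fv p = {}"

text \<open>A language: a set of function symbols and a set of relation symbols, each given as
(name, arity).\<close>
type_synonym lang = "(nat \<times> nat) set \<times> (nat \<times> nat) set"

fun funs_t :: "trm \<Rightarrow> (nat \<times> nat) set" where
  "funs_t (Var i) = {}"
| "funs_t (Fn f ts) = insert (f, length ts) (\<Union>t\<in>set ts. funs_t t)"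

fun funs :: "fm \<Rightarrow> (nat \<times> nat) set" where
  "funs (Eq s t) = funs_t s \<union> funs_t t"
| "funs (Rel r ts) = (\<Union>t\<in>set ts. funs_t t)"
| "funs Bot = {}"
| "funs (Imp p q) = funs p \<union> funs q"
| "funs (All p) = funs p"

fun rels :: "fm \<Rightarrow> (nat \<times> nat) set" where
  "rels (Eq s t) = {}"
| "rels (Rel r ts) = {(r, length ts)}"
| "rels Bot = {}"
| "rels (Imp p q) = rels p \<union> rels q"
| "rels (All p) = rels p"

definition in_lang :: "lang \<Rightarrow> fm \<Rightarrow> bool" where
  "in_lang L p \<longleftrightarrow> funs p \<subseteq> fst L \<and> rels p \<subseteq> snd L"

text \<open>Since the signature is countable, by
Loewenheim--Skolem it suffices to consider carriers that are subsets of nat.\<close>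
record struc =
  dom :: "nat set"
  fint :: "nat \<Rightarrow> nat list \<Rightarrow> nat"
  rint :: "nat \<Rightarrow> nat list \<Rightarrow> bool"

definition is_struc :: "struc \<Rightarrow> bool" where
  "is_struc M \<longleftrightarrow> dom M \<noteq> {} \<and>
     (\<forall>f xs. set xs \<subseteq> dom M \<longrightarrow> fint M f xs \<in> dom M)"

fun evalt :: "struc \<Rightarrow> (nat \<Rightarrow> nat) \<Rightarrow> trm \<Rightarrow> nat" where
  "evalt M e (Var i) = e i"
| "evalt M e (Fn f ts) = fint M f (map (evalt M e) ts)"

definition cons_env :: "nat \<Rightarrow> (nat \<Rightarrow> nat) \<Rightarrow> nat \<Rightarrow> nat" where
  "cons_env d e i = (case i of 0 \<Rightarrow> d | Suc j \<Rightarrow> e j)"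

fun sat :: "struc \<Rightarrow> (nat \<Rightarrow> nat) \<Rightarrow> fm \<Rightarrow> bool" where
  "sat M e (Eq s t) = (evalt M e s = evalt M e t)"
| "sat M e (Rel r ts) = rint M r (map (evalt M e) ts)"
| "sat M e Bot = False"
| "sat M e (Imp p q) = (sat M e p \<longrightarrow> sat M e q)"
| "sat M e (All p) = (\<forall>d\<in>dom M. sat M (cons_env d e) p)"

definition valid_in :: "struc \<Rightarrow> fm \<Rightarrow> bool" where
  "valid_in M p \<longleftrightarrow> (\<forall>e. range e \<subseteq> dom M \<longrightarrow> sat M e p)"

definition conseq :: "fm set \<Rightarrow> fm \<Rightarrow> bool" where
  "conseq T p \<longleftrightarrow> (\<forall>M. is_struc M \<longrightarrow> (\<forall>q\<in>T. valid_in M q) \<longrightarrow> valid_in M p)"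

definition is_theory :: "lang \<Rightarrow> fm set \<Rightarrow> bool" where
  "is_theory L T \<longleftrightarrow> (\<forall>p\<in>T. sentence p \<and> in_lang L p) \<and>
     (\<forall>p. sentence p \<and> in_lang L p \<and> conseq T p \<longrightarrow> p \<in> T)"

definition Zero :: trm where "Zero = Fn 0 []"
definition Sc :: "trm \<Rightarrow> trm" where "Sc t = Fn 1 [t]"
definition Pl :: "trm \<Rightarrow> trm \<Rightarrow> trm" where "Pl s t = Fn 2 [s, t]"
definition Tm :: "trm \<Rightarrow> trm \<Rightarrow> trm" where "Tm s t = Fn 3 [s, t]"

definition Q_axioms :: "fm set" where
  "Q_axioms = {
     All (Neg (Eq (Sc (Var 0)) Zero)),
     All (All (Imp (Eq (Sc (Var 1)) (Sc (Var 0))) (Eq (Var 1) (Var 0)))),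
     All (Or (Eq (Var 0) Zero) (Ex (Eq (Sc (Var 0)) (Var 1)))),
     All (Eq (Pl (Var 0) Zero) (Var 0)),
     All (All (Eq (Pl (Var 1) (Sc (Var 0))) (Sc (Pl (Var 1) (Var 0))))),
     All (Eq (Tm (Var 0) Zero) Zero),
     All (All (Eq (Tm (Var 1) (Sc (Var 0))) (Pl (Var 1) (Tm (Var 1) (Var 0)))))}"

definition extends_Q :: "lang \<Rightarrow> fm set \<Rightarrow> bool" where
  "extends_Q L T \<longleftrightarrow> is_theory L T \<and> Q_axioms \<subseteq> T"

fun num :: "nat \<Rightarrow> trm" where
  "num 0 = Zero"
| "num (Suc n) = Sc (num n)"

text \<open>In a formula with free variables among 0..k, variable i (i<k) is x_(i+1) and variable k
is y.  inst xs t p substitutes the numerals of xs for the x's and the term t for y.\<close>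
definition inst :: "nat list \<Rightarrow> trm \<Rightarrow> fm \<Rightarrow> fm" where
  "inst xs t p = subst (\<lambda>i. if i < length xs then num (xs ! i)
                             else if i = length xs then t else Var 0) p"

text \<open>The sentence (\<exists>!y'. <f>(xs,y')) \<and> <f>(xs, y), with
 \<exists>!y. P(y) := \<exists>y. P(y) \<and> (\<forall>z. P(z) \<longrightarrow> z = y).\<close>
definition repr_sentence :: "fm \<Rightarrow> nat list \<Rightarrow> nat \<Rightarrow> fm" where
  "repr_sentence p xs y =
     And (Ex (And (inst xs (Var 0) p)
                  (All (Imp (inst xs (Var 0) p) (Eq (Var 0) (Var 1))))))
         (inst xs (num y) p)"

definition represents :: "lang \<Rightarrow> fm set \<Rightarrow> nat \<Rightarrow> (nat list \<Rightarrow> nat option) \<Rightarrow> bool" where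
  "represents L T k f \<longleftrightarrow> (\<exists>p. in_lang L p \<and> fv p \<subseteq> {..k} \<and>
     (\<forall>xs y. length xs = k \<and> f xs = Some y \<longrightarrow> repr_sentence p xs y \<in> T))"

text \<open>k-ary partial functions are functions nat list \<Rightarrow> nat option, only their values on lists
of length k matter.  orec m g k f: f is k-ary partial recursive relative to the m-ary partial
function g (Turing-reducibility in the form of relative partial recursiveness; Kleene: closure of zero, successor, projections and g under composition, primitive
recursion and unbounded minimisation).\<close>

fun prec :: "(nat list \<Rightarrow> nat option) \<Rightarrow> (nat list \<Rightarrow> nat option) \<Rightarrow> nat \<Rightarrow> nat list \<Rightarrow> nat option" where
  "prec b s 0 xs = b xs"
| "prec b s (Suc n) xs = (case prec b s n xs of None \<Rightarrow> None | Some r \<Rightarrow> s (n # r # xs))"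

definition minim :: "(nat list \<Rightarrow> nat option) \<Rightarrow> nat list \<Rightarrow> nat option" where
  "minim f xs = (if \<exists>y. f (y # xs) = Some 0 \<and> (\<forall>z<y. f (z # xs) \<noteq> None)
                 then Some (LEAST y. f (y # xs) = Some 0 \<and> (\<forall>z<y. f (z # xs) \<noteq> None))
                 else None)"

inductive orec :: "nat \<Rightarrow> (nat list \<Rightarrow> nat option) \<Rightarrow> nat \<Rightarrow> (nat list \<Rightarrow> nat option) \<Rightarrow> bool"
  for m :: nat and g :: "nat list \<Rightarrow> nat option" where
  zero: "orec m g k (\<lambda>xs. Some 0)"
| succ: "orec m g 1 (\<lambda>xs. Some (Suc (hd xs)))"
| proj: "i < k \<Longrightarrow> orec m g k (\<lambda>xs. Some (xs ! i))"
| query: "orec m g m g"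
| comp: "orec m g n h \<Longrightarrow> length hs = n \<Longrightarrow> list_all (orec m g k) hs \<Longrightarrow>
           orec m g k (\<lambda>xs. if list_all (\<lambda>h'. h' xs \<noteq> None) hs
                            then h (map (\<lambda>h'. the (h' xs)) hs) else None)"
| prim_rec: "orec m g k b \<Longrightarrow> orec m g (Suc (Suc k)) s \<Longrightarrow>
           orec m g (Suc k) (\<lambda>ys. prec b s (hd ys) (tl ys))"
| mu: "orec m g (Suc k) f \<Longrightarrow> orec m g k (minim f)"
| ext: "orec m g k f \<Longrightarrow> (\<forall>xs. length xs = k \<longrightarrow> f' xs = f xs) \<Longrightarrow> orec m g k f'"

end

theory Submission
  imports Defs "HOL-Number_Theory.Cong"
begin

text \<open>Since \<open>T\<close> is closed under semantic consequence, it suffices to find for every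
\<open>g\<close>-computable \<open>f\<close> one formula which, in every model of \<open>T\<close>, holds at standard
arguments \<open>xs\<close> with \<open>f xs\<close> defined for exactly one element, namely the numeral value
of \<open>f xs\<close>.  The formula representing \<open>g\<close> has this property because \<open>T\<close> proves the
uniqueness clause.  It is preserved by composition (existential quantification over the
intermediate values), by minimisation (in a model of \<open>Q\<close> every element below a
standard number is standard, and every other element lies above it) and by primitive
recursion, where the computation sequence is coded by Goedel's \<open>\<beta>\<close>-function and its
uniqueness follows by an external induction along the standard indices.\<close>

lemma cons_env_simps[simp]: "cons_env d e 0 = d" "cons_env d e (Suc j) = e j"
  by (simp_all add: cons_env_def)

lemma evalt_liftt[simp]: "evalt M (cons_env d e) (liftt t) = evalt M e t"
  by (induction t) (simp_all add: o_def cong: map_cong)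

lemma evalt_substt: "evalt M e (substt \<sigma> t) = evalt M (\<lambda>i. evalt M e (\<sigma> i)) t"
  by (induction t) (simp_all add: o_def cong: map_cong)

lemma sat_subst: "sat M e (subst \<sigma> p) = sat M (\<lambda>i. evalt M e (\<sigma> i)) p"
proof (induction p arbitrary: e \<sigma>)
  case (All p)
  have "\<And>d. (\<lambda>i. evalt M (cons_env d e) (case i of 0 \<Rightarrow> Var 0 | Suc j \<Rightarrow> liftt (\<sigma> j)))
        = cons_env d (\<lambda>i. evalt M e (\<sigma> i))"
    by (auto simp: cons_env_def fun_eq_iff split: nat.split)
  then show ?case using All by simp
qed (auto simp: evalt_substt o_def)

lemma sat_subst_env: "(\<And>i. evalt M e (\<sigma> i) = e' i) \<Longrightarrow> sat M e (subst \<sigma> p) = sat M e' p"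
  by (simp add: sat_subst)

lemma evalt_cong: "(\<And>i. i \<in> fvt t \<Longrightarrow> e i = e' i) \<Longrightarrow> evalt M e t = evalt M e' t"
proof (induction t)
  case (Fn f ts)
  then have "map (evalt M e) ts = map (evalt M e') ts" by auto
  then show ?case by (simp only: evalt.simps)
qed auto

lemma sat_cong: "(\<And>i. i \<in> fv p \<Longrightarrow> e i = e' i) \<Longrightarrow> sat M e p = sat M e' p"
proof (induction p arbitrary: e e')
  case (Eq s t) then show ?case using evalt_cong[of s e e' M] evalt_cong[of t e e' M] by auto
next
  case (Rel r ts)
  then have "map (evalt M e) ts = map (evalt M e') ts" by (auto intro!: evalt_cong)
  then show ?case by (simp only: sat.simps)
next
  case (Imp p q) then show ?case by (metis UnCI fv.simps(4) sat.simps(4))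
next
  case (All p)
  have "\<And>d. sat M (cons_env d e) p = sat M (cons_env d e') p"
    by (rule All.IH) (use All.prems in \<open>auto simp: cons_env_def split: nat.split\<close>)
  then show ?case by simp
qed auto

lemma fvt_liftt[simp]: "fvt (liftt t) = Suc ` fvt t"
  by (induction t) auto

lemma fvt_substt: "fvt (substt \<sigma> t) = (\<Union>i\<in>fvt t. fvt (\<sigma> i))"
  by (induction t) auto

lemma fv_subst: "fv (subst \<sigma> p) \<subseteq> (\<Union>i\<in>fv p. fvt (\<sigma> i))"
proof (induction p arbitrary: \<sigma>)
  case (All p)
  show ?case
  proof
    fix x assume "x \<in> fv (subst \<sigma> (All p))"
    then have "Suc x \<in> fv (subst (\<lambda>i. case i of 0 \<Rightarrow> Var 0 | Suc j \<Rightarrow> liftt (\<sigma> j)) p)" by simp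
    with All obtain i where i: "i \<in> fv p" "Suc x \<in> fvt (case i of 0 \<Rightarrow> Var 0 | Suc j \<Rightarrow> liftt (\<sigma> j))"
      by blast
    then obtain j where "i = Suc j" by (cases i) auto
    with i show "x \<in> (\<Union>i\<in>fv (All p). fvt (\<sigma> i))" by auto
  qed
next
  case (Imp p q) then show ?case by (simp; blast)
qed (auto simp: fvt_substt)

lemma funs_t_liftt[simp]: "funs_t (liftt t) = funs_t t"
  by (induction t) auto

lemma funs_t_substt: "funs_t (substt \<sigma> t) \<subseteq> funs_t t \<union> (\<Union>i. funs_t (\<sigma> i))"
  by (induction t) auto

lemma funs_subst: "funs (subst \<sigma> p) \<subseteq> funs p \<union> (\<Union>i. funs_t (\<sigma> i))"
proof (induction p arbitrary: \<sigma>)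
  case (All p)
  define \<sigma>' where "\<sigma>' = (\<lambda>i. case i of 0 \<Rightarrow> Var 0 | Suc j \<Rightarrow> liftt (\<sigma> j))"
  have h: "(\<Union>i. funs_t (\<sigma>' i)) \<subseteq> (\<Union>i. funs_t (\<sigma> i))"
    by (auto simp: \<sigma>'_def split: nat.splits)
  have IH: "funs (subst \<sigma>' p) \<subseteq> funs p \<union> (\<Union>i. funs_t (\<sigma>' i))" by (rule All)
  have "funs (subst \<sigma> (All p)) = funs (subst \<sigma>' p)" by (simp add: \<sigma>'_def)
  with IH h show ?case by auto
next
  case (Eq s t) then show ?case using funs_t_substt[of \<sigma> s] funs_t_substt[of \<sigma> t] by auto
next
  case (Rel r ts) then show ?case using funs_t_substt[of \<sigma>] by fastforce
qed auto

lemma rels_subst[simp]: "rels (subst \<sigma> p) = rels p"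
  by (induction p arbitrary: \<sigma>) auto

lemma in_lang_subst:
  assumes "in_lang L p" and "\<And>i. funs_t (\<sigma> i) \<subseteq> fst L"
  shows "in_lang L (subst \<sigma> p)"
proof -
  have "funs (subst \<sigma> p) \<subseteq> fst L" using funs_subst[of \<sigma> p] assms by (auto simp: in_lang_def)
  then show ?thesis using assms(1) by (simp add: in_lang_def)
qed

lemma sat_Neg[simp]: "sat M e (Neg p) = (\<not> sat M e p)" by (simp add: Neg_def)
lemma sat_And[simp]: "sat M e (And p q) = (sat M e p \<and> sat M e q)" by (simp add: And_def)
lemma sat_Ex[simp]: "sat M e (Ex p) = (\<exists>d\<in>dom M. sat M (cons_env d e) p)" by (simp add: Ex_def)

lemma fv_And[simp]: "fv (And p q) = fv p \<union> fv q" by (simp add: And_def Neg_def)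
lemma fv_Ex[simp]: "fv (Ex p) = {i. Suc i \<in> fv p}" by (simp add: Ex_def Neg_def)

lemma funs_Neg[simp]: "funs (Neg p) = funs p" by (simp add: Neg_def)
lemma funs_And[simp]: "funs (And p q) = funs p \<union> funs q" by (simp add: And_def)
lemma funs_Ex[simp]: "funs (Ex p) = funs p" by (simp add: Ex_def)
lemma rels_Neg[simp]: "rels (Neg p) = rels p" by (simp add: Neg_def)
lemma rels_And[simp]: "rels (And p q) = rels p \<union> rels q" by (simp add: And_def)
lemma rels_Ex[simp]: "rels (Ex p) = rels p" by (simp add: Ex_def)

lemma in_lang_Bot[simp]: "in_lang L Bot"
  by (simp add: in_lang_def)
lemma in_lang_Eq[simp]: "in_lang L (Eq s t) \<longleftrightarrow> funs_t s \<subseteq> fst L \<and> funs_t t \<subseteq> fst L"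
  by (simp add: in_lang_def)
lemma in_lang_Neg[simp]: "in_lang L (Neg p) = in_lang L p"
  by (simp add: in_lang_def)
lemma in_lang_And[simp]: "in_lang L (And p q) = (in_lang L p \<and> in_lang L q)"
  by (auto simp add: in_lang_def)
lemma in_lang_Ex[simp]: "in_lang L (Ex p) = in_lang L p"
  by (simp add: in_lang_def)
lemma in_lang_Imp[simp]: "in_lang L (Imp p q) = (in_lang L p \<and> in_lang L q)"
  by (auto simp add: in_lang_def)
lemma in_lang_All[simp]: "in_lang L (All p) = in_lang L p"
  by (simp add: in_lang_def)

fun Conj :: "fm list \<Rightarrow> fm" where
  "Conj [] = Neg Bot"
| "Conj (p # ps) = And p (Conj ps)"

lemma sat_Conj[simp]: "sat M e (Conj ps) \<longleftrightarrow> (\<forall>q\<in>set ps. sat M e q)"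
  by (induction ps) auto

lemma in_lang_Conj[simp]: "in_lang L (Conj ps) \<longleftrightarrow> (\<forall>q\<in>set ps. in_lang L q)"
  by (induction ps) (auto simp: in_lang_def)

fun Exs :: "nat \<Rightarrow> fm \<Rightarrow> fm" where
  "Exs 0 p = p"
| "Exs (Suc n) p = Ex (Exs n p)"

lemma in_lang_Exs[simp]: "in_lang L (Exs n p) = in_lang L p"
  by (induction n) auto

text \<open>\<open>prefix_env ds e\<close> is the environment after binding \<open>Exs (length ds)\<close>, the
innermost quantifier (variable 0) ranging over \<open>ds ! 0\<close>.\<close>
definition prefix_env :: "nat list \<Rightarrow> (nat \<Rightarrow> nat) \<Rightarrow> nat \<Rightarrow> nat" where
  "prefix_env ds e i = (if i < length ds then ds ! i else e (i - length ds))"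

lemma prefix_env_snoc: "prefix_env ds (cons_env d e) = prefix_env (ds @ [d]) e"
proof
  fix i
  consider "i < length ds" | "i = length ds" | "length ds < i" by linarith
  then show "prefix_env ds (cons_env d e) i = prefix_env (ds @ [d]) e i"
  proof cases
    case 3
    then have "i - length ds = Suc (i - Suc (length ds))" by simp
    then show ?thesis using 3 by (simp add: prefix_env_def nth_append)
  qed (auto simp: prefix_env_def nth_append)
qed

lemma sat_Exs:
  "sat M e (Exs n p) \<longleftrightarrow> (\<exists>ds. length ds = n \<and> set ds \<subseteq> dom M \<and> sat M (prefix_env ds e) p)"
proof (induction n arbitrary: e)
  case 0
  have "prefix_env [] e = e" by (simp add: fun_eq_iff prefix_env_def)
  then show ?case by simp
next
  case (Suc n)
  have "sat M e (Exs (Suc n) p) \<longleftrightarrow>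
      (\<exists>d\<in>dom M. \<exists>ds. length ds = n \<and> set ds \<subseteq> dom M \<and> sat M (prefix_env (ds @ [d]) e) p)"
    using Suc by (simp add: prefix_env_snoc)
  also have "\<dots> \<longleftrightarrow> (\<exists>ds. length ds = Suc n \<and> set ds \<subseteq> dom M \<and> sat M (prefix_env ds e) p)"
  proof
    assume "\<exists>ds. length ds = Suc n \<and> set ds \<subseteq> dom M \<and> sat M (prefix_env ds e) p"
    then obtain ds where ds: "length ds = Suc n" "set ds \<subseteq> dom M" "sat M (prefix_env ds e) p" by blast
    then obtain ds' d where "ds = ds' @ [d]" by (metis length_Suc_conv_rev)
    with ds show "\<exists>d\<in>dom M. \<exists>ds. length ds = n \<and> set ds \<subseteq> dom M \<and> sat M (prefix_env (ds @ [d]) e) p"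
      by auto
  next
    assume "\<exists>d\<in>dom M. \<exists>ds. length ds = n \<and> set ds \<subseteq> dom M \<and> sat M (prefix_env (ds @ [d]) e) p"
    then obtain d ds where "d \<in> dom M" "length ds = n" "set ds \<subseteq> dom M" "sat M (prefix_env (ds @ [d]) e) p"
      by blast
    then show "\<exists>ds. length ds = Suc n \<and> set ds \<subseteq> dom M \<and> sat M (prefix_env ds e) p"
      by (intro exI[of _ "ds @ [d]"]) auto
  qed
  finally show ?case .
qed

text \<open>A formula with \<open>k\<close> arguments uses variables \<open>0..<k\<close> for the arguments and
variable \<open>k\<close> for the value, as in \<open>inst\<close>; the remaining variables are
irrelevant and set to \<open>c\<close>.\<close>
definition arg_env :: "nat list \<Rightarrow> nat \<Rightarrow> nat \<Rightarrow> nat \<Rightarrow> nat" where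
  "arg_env xs y c i = (if i < length xs then xs ! i else if i = length xs then y else c)"

lemma arg_env_map_nth[simp]: "i < length zs \<Longrightarrow> arg_env (map h zs) y c i = h (zs ! i)"
  and arg_env_map_length[simp]: "arg_env (map h zs) y c (length zs) = y"
  by (simp_all add: arg_env_def)

lemma sat_arg_env_cong:
  "fv p \<subseteq> {..length xs} \<Longrightarrow> sat M (arg_env xs y c) p = sat M (arg_env xs y c') p"
  by (rule sat_cong) (auto simp: arg_env_def)

section \<open>Models of Robinson arithmetic\<close>

definition arith_symbols :: "(nat \<times> nat) set" where
  "arith_symbols = {(0, 0), (1, 1), (2, 2), (3, 2)}"

lemma funs_t_arith[simp]:
  "funs_t Zero = {(0, 0)}"
  "funs_t (Sc t) = insert (1, 1) (funs_t t)"
  "funs_t (Pl s t) = insert (2, 2) (funs_t s \<union> funs_t t)"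
  "funs_t (Tm s t) = insert (3, 2) (funs_t s \<union> funs_t t)"
  by (auto simp: Zero_def Sc_def Pl_def Tm_def numeral_2_eq_2)

lemma funs_t_num: "funs_t (num n) \<subseteq> arith_symbols"
  by (induction n) (auto simp: arith_symbols_def)

lemma fvt_num[simp]: "fvt (num n) = {}"
  by (induction n) (auto simp: Zero_def Sc_def)

definition q_zero :: "struc \<Rightarrow> nat" where "q_zero M = fint M 0 []"
definition q_suc :: "struc \<Rightarrow> nat \<Rightarrow> nat" where "q_suc M a = fint M 1 [a]"
definition q_plus :: "struc \<Rightarrow> nat \<Rightarrow> nat \<Rightarrow> nat" where "q_plus M a b = fint M 2 [a, b]"
definition q_times :: "struc \<Rightarrow> nat \<Rightarrow> nat \<Rightarrow> nat" where "q_times M a b = fint M 3 [a, b]"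

lemma evalt_arith[simp]:
  "evalt M e Zero = q_zero M"
  "evalt M e (Sc t) = q_suc M (evalt M e t)"
  "evalt M e (Pl s t) = q_plus M (evalt M e s) (evalt M e t)"
  "evalt M e (Tm s t) = q_times M (evalt M e s) (evalt M e t)"
  by (simp_all add: Zero_def Sc_def Pl_def Tm_def q_zero_def q_suc_def q_plus_def q_times_def)

fun q_num :: "struc \<Rightarrow> nat \<Rightarrow> nat" where
  "q_num M 0 = q_zero M"
| "q_num M (Suc n) = q_suc M (q_num M n)"

lemma evalt_num[simp]: "evalt M e (num n) = q_num M n"
  by (induction n) simp_all

definition q_le :: "struc \<Rightarrow> nat \<Rightarrow> nat \<Rightarrow> bool" where
  "q_le M a b \<longleftrightarrow> (\<exists>w\<in>dom M. q_plus M w a = b)"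

abbreviation q_less :: "struc \<Rightarrow> nat \<Rightarrow> nat \<Rightarrow> bool" where
  "q_less M a b \<equiv> q_le M (q_suc M a) b"

definition LeF :: "trm \<Rightarrow> trm \<Rightarrow> fm" where
  "LeF s t = Ex (Eq (Pl (Var 0) (liftt s)) (liftt t))"

abbreviation LtF :: "trm \<Rightarrow> trm \<Rightarrow> fm" where
  "LtF s t \<equiv> LeF (Sc s) t"

lemma sat_LeF[simp]: "sat M e (LeF s t) = q_le M (evalt M e s) (evalt M e t)"
  by (simp add: LeF_def q_le_def)

lemma in_lang_LeF[simp]:
  "arith_symbols \<subseteq> fst L \<Longrightarrow> in_lang L (LeF s t) \<longleftrightarrow> funs_t s \<subseteq> fst L \<and> funs_t t \<subseteq> fst L"
  by (auto simp: LeF_def arith_symbols_def)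

locale Q_model =
  fixes M :: struc
  assumes struc: "is_struc M"
    and Q_valid: "\<forall>q\<in>Q_axioms. valid_in M q"
begin

lemma fint_closed: "set xs \<subseteq> dom M \<Longrightarrow> fint M f xs \<in> dom M"
  using struc by (simp add: is_struc_def)

lemma q_zero_dom[simp]: "q_zero M \<in> dom M"
  and q_suc_dom[simp]: "a \<in> dom M \<Longrightarrow> q_suc M a \<in> dom M"
  and q_plus_dom[simp]: "a \<in> dom M \<Longrightarrow> b \<in> dom M \<Longrightarrow> q_plus M a b \<in> dom M"
  and q_times_dom[simp]: "a \<in> dom M \<Longrightarrow> b \<in> dom M \<Longrightarrow> q_times M a b \<in> dom M"
  by (simp_all add: fint_closed q_zero_def q_suc_def q_plus_def q_times_def)

lemma q_num_dom[simp]: "q_num M n \<in> dom M"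
  by (induction n) simp_all

lemma Q_axiom_sat: "q \<in> Q_axioms \<Longrightarrow> a \<in> dom M \<Longrightarrow> sat M (\<lambda>_. a) q"
  using Q_valid by (auto simp: valid_in_def)

lemma suc_neq_zero: "a \<in> dom M \<Longrightarrow> q_suc M a \<noteq> q_zero M"
  using Q_axiom_sat[of "All (Neg (Eq (Sc (Var 0)) Zero))" a]
  by (simp add: Q_axioms_def)

lemma suc_inj: "a \<in> dom M \<Longrightarrow> b \<in> dom M \<Longrightarrow> q_suc M a = q_suc M b \<Longrightarrow> a = b"
  using Q_axiom_sat[of "All (All (Imp (Eq (Sc (Var 1)) (Sc (Var 0))) (Eq (Var 1) (Var 0))))" a]
  by (simp add: Q_axioms_def)

lemma zero_or_suc: "a \<in> dom M \<Longrightarrow> a = q_zero M \<or> (\<exists>b\<in>dom M. q_suc M b = a)"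
  using Q_axiom_sat[of "All (Or (Eq (Var 0) Zero) (Ex (Eq (Sc (Var 0)) (Var 1))))" a]
  by (auto simp: Q_axioms_def Or_def)

lemma plus_zero: "a \<in> dom M \<Longrightarrow> q_plus M a (q_zero M) = a"
  using Q_axiom_sat[of "All (Eq (Pl (Var 0) Zero) (Var 0))" a]
  by (simp add: Q_axioms_def)

lemma plus_suc: "a \<in> dom M \<Longrightarrow> b \<in> dom M \<Longrightarrow> q_plus M a (q_suc M b) = q_suc M (q_plus M a b)"
  using Q_axiom_sat[of "All (All (Eq (Pl (Var 1) (Sc (Var 0))) (Sc (Pl (Var 1) (Var 0)))))" a]
  by (simp add: Q_axioms_def)

lemma times_zero: "a \<in> dom M \<Longrightarrow> q_times M a (q_zero M) = q_zero M"
  using Q_axiom_sat[of "All (Eq (Tm (Var 0) Zero) Zero)" a]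
  by (simp add: Q_axioms_def)

lemma times_suc: "a \<in> dom M \<Longrightarrow> b \<in> dom M \<Longrightarrow>
    q_times M a (q_suc M b) = q_plus M a (q_times M a b)"
  using Q_axiom_sat[of "All (All (Eq (Tm (Var 1) (Sc (Var 0))) (Pl (Var 1) (Tm (Var 1) (Var 0)))))" a]
  by (simp add: Q_axioms_def)

lemma q_num_inj[simp]: "q_num M m = q_num M n \<longleftrightarrow> m = n"
proof (induction m arbitrary: n)
  case 0
  show ?case using suc_neq_zero[OF q_num_dom] by (cases n) (simp_all, metis)
next
  case (Suc m)
  then show ?case using suc_neq_zero[OF q_num_dom] suc_inj[OF q_num_dom q_num_dom] by (cases n) auto
qed

lemma plus_num_iter: "a \<in> dom M \<Longrightarrow> q_plus M a (q_num M n) = (q_suc M ^^ n) a"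
  by (induction n) (simp_all add: plus_zero plus_suc)

lemma plus_num[simp]: "q_plus M (q_num M a) (q_num M b) = q_num M (a + b)"
proof -
  have "(q_suc M ^^ b) (q_num M a) = q_num M (a + b)" by (induction b) simp_all
  then show ?thesis by (simp add: plus_num_iter)
qed

lemma times_num[simp]: "q_times M (q_num M a) (q_num M b) = q_num M (a * b)"
  by (induction b) (simp_all add: times_zero times_suc)

lemma num_le_num: "j \<le> n \<Longrightarrow> q_le M (q_num M j) (q_num M n)"
  unfolding q_le_def using plus_num[of "n - j" j] q_num_dom by (metis le_add_diff_inverse2)

lemma num_less_num: "j < n \<Longrightarrow> q_less M (q_num M j) (q_num M n)"
  using num_le_num[of "Suc j" n] by simp

lemma le_num_imp_num: "x \<in> dom M \<Longrightarrow> q_le M x (q_num M n) \<Longrightarrow> \<exists>j\<le>n. x = q_num M j"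
proof (induction n arbitrary: x)
  case 0
  then obtain w where w: "w \<in> dom M" "q_plus M w x = q_zero M" by (auto simp: q_le_def)
  from zero_or_suc[OF 0(1)] show ?case
  proof
    assume "\<exists>b\<in>dom M. q_suc M b = x"
    then obtain b where "b \<in> dom M" "x = q_suc M b" by auto
    with w show ?thesis by (simp add: plus_suc suc_neq_zero)
  qed simp
next
  case (Suc n)
  then obtain w where w: "w \<in> dom M" "q_plus M w x = q_num M (Suc n)" by (auto simp: q_le_def)
  from zero_or_suc[OF Suc(2)] show ?case
  proof
    assume "\<exists>b\<in>dom M. q_suc M b = x"
    then obtain b where b: "b \<in> dom M" "x = q_suc M b" by auto
    with w have "q_suc M (q_plus M w b) = q_suc M (q_num M n)" by (simp add: plus_suc)
    with w(1) b(1) have "q_plus M w b = q_num M n" by (blast intro: suc_inj q_plus_dom q_num_dom)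
    with Suc.IH[OF b(1)] w(1) obtain j where "j \<le> n" "b = q_num M j" by (auto simp: q_le_def)
    with b show ?thesis by (intro exI[of _ "Suc j"]) auto
  qed (intro exI[of _ 0]; simp)
qed

lemma less_num_imp_num: "x \<in> dom M \<Longrightarrow> q_less M x (q_num M n) \<Longrightarrow> \<exists>j<n. x = q_num M j"
proof -
  assume x: "x \<in> dom M" "q_less M x (q_num M n)"
  then obtain j where j: "j \<le> n" "q_suc M x = q_num M j"
    using le_num_imp_num[OF q_suc_dom[OF x(1)]] by blast
  then obtain j' where "j = Suc j'" using suc_neq_zero[OF x(1)] by (cases j) auto
  with j x show ?thesis using suc_inj[OF x(1) q_num_dom, of j'] by auto
qed

lemma num_le_imp_eq_or_less:
  assumes "q_le M (q_num M n) x"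
  shows "x = q_num M n \<or> q_less M (q_num M n) x"
proof -
  obtain w where w: "w \<in> dom M" "q_plus M w (q_num M n) = x" using assms by (auto simp: q_le_def)
  from zero_or_suc[OF w(1)] show ?thesis
  proof
    assume "\<exists>b\<in>dom M. q_suc M b = w"
    then obtain b where b: "b \<in> dom M" "q_suc M b = w" by blast
    have "q_plus M b (q_num M (Suc n)) = (q_suc M ^^ n) w"
      using plus_num_iter[OF b(1), of "Suc n"] b(2) by (simp only: funpow_Suc_right o_apply)
    with w b(1) show ?thesis by (auto simp: q_le_def plus_num_iter)
  qed (use w plus_num[of 0 n] in simp)
qed

lemma below_or_above_num: "x \<in> dom M \<Longrightarrow> (\<exists>j<n. x = q_num M j) \<or> q_le M (q_num M n) x"
proof (induction n)
  case 0 then show ?case using plus_zero by (auto simp: q_le_def)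
next
  case (Suc n)
  then show ?case using num_le_imp_eq_or_less[of n x] less_SucI by auto
qed

end

section \<open>Goedel's \<open>\<beta>\<close>-function\<close>

definition goedel_beta :: "nat \<Rightarrow> nat \<Rightarrow> nat \<Rightarrow> nat" where
  "goedel_beta a b i = a mod Suc (Suc i * b)"

lemma goedel_beta_moduli_coprime:
  fixes b :: nat
  assumes "i < j" "j - i dvd b"
  shows "coprime (Suc (Suc i * b)) (Suc (Suc j * b))"
proof (rule coprimeI)
  fix d assume d1: "d dvd Suc (Suc i * b)" and d2: "d dvd Suc (Suc j * b)"
  have e1: "Suc j * Suc (Suc i * b) = Suc j + Suc j * Suc i * b" by (simp add: algebra_simps)
  have e2: "Suc i * Suc (Suc j * b) = Suc i + Suc j * Suc i * b" by (simp add: algebra_simps)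
  have "d dvd Suc j * Suc (Suc i * b) - Suc i * Suc (Suc j * b)"
    using dvd_mult[OF d1, of "Suc j"] dvd_mult[OF d2, of "Suc i"] by (rule dvd_diff_nat)
  also have "Suc j * Suc (Suc i * b) - Suc i * Suc (Suc j * b) = j - i"
    unfolding e1 e2 using assms by simp
  finally have "d dvd Suc i * b" using assms(2) dvd_trans dvd_mult by blast
  then have "d dvd Suc (Suc i * b) - Suc i * b" using d1 by (intro dvd_diff_nat)
  then show "is_unit d" by simp
qed

text \<open>With \<open>b = B!\<close> for \<open>B\<close> exceeding \<open>N\<close> and all values, the moduli are pairwise
coprime and larger than the values, so the Chinese remainder theorem provides \<open>a\<close>.\<close>
lemma goedel_beta_codes_sequence: "\<exists>a b. \<forall>i\<le>N. goedel_beta a b i = v i"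
proof -
  define B where "B = Suc (Max (insert N (v ` {..N})))"
  define b where "b = (fact B :: nat)"
  have vB: "v i < B" if "i \<le> N" for i
  proof -
    have "v i \<le> Max (v ` {..N})" using that by (intro Max_ge) auto
    then show ?thesis unfolding B_def by (simp add: le_imp_less_Suc)
  qed
  have Bb: "B \<le> b" unfolding b_def by (rule fact_ge_self)
  have less: "v i < Suc (Suc i * b)" if "i \<le> N" for i
    using vB[OF that] Bb by simp
  have NB: "N < B" unfolding B_def by (simp add: le_imp_less_Suc)
  have dvd: "j - i dvd b" if "i < j" "j \<le> N" for i j
    unfolding b_def using that NB by (intro dvd_fact) auto
  have "\<forall>i\<in>{..N}. \<forall>j\<in>{..N}. i \<noteq> j \<longrightarrow> coprime (Suc (Suc i * b)) (Suc (Suc j * b))"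
    by (metis atMost_iff coprime_commute dvd goedel_beta_moduli_coprime linorder_neqE_nat)
  then obtain a where "\<forall>i\<in>{..N}. [a = v i] (mod Suc (Suc i * b))"
    using chinese_remainder_nat[of "{..N}" "\<lambda>i. Suc (Suc i * b)" v] by auto
  then have "\<forall>i\<le>N. goedel_beta a b i = v i"
    using less by (auto simp: goedel_beta_def cong_def)
  then show ?thesis by blast
qed

text \<open>\<open>\<beta>(a, b, i) = z\<close> expressed in the language of \<open>Q\<close>: with \<open>m = (i + 1) b + 1\<close>, \<open>z < m\<close>
and \<open>q m + z = a\<close> for some \<open>q \<le> a\<close>.  Bounding the quotient keeps it standard in every model.\<close>
definition BetaF :: "trm \<Rightarrow> trm \<Rightarrow> trm \<Rightarrow> trm \<Rightarrow> fm" where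
  "BetaF a b i z = And (LtF z (Sc (Tm (Sc i) b)))
     (Ex (And (LeF (Var 0) (liftt a)) (Eq (Pl (Tm (Var 0) (liftt (Sc (Tm (Sc i) b)))) (liftt z)) (liftt a))))"

definition beta_rel :: "struc \<Rightarrow> nat \<Rightarrow> nat \<Rightarrow> nat \<Rightarrow> nat \<Rightarrow> bool" where
  "beta_rel M a b i z \<longleftrightarrow> q_less M z (q_suc M (q_times M (q_suc M i) b)) \<and>
     (\<exists>q\<in>dom M. q_le M q a \<and> q_plus M (q_times M q (q_suc M (q_times M (q_suc M i) b))) z = a)"

lemma sat_BetaF[simp]:
  "sat M e (BetaF a b i z) = beta_rel M (evalt M e a) (evalt M e b) (evalt M e i) (evalt M e z)"
  by (simp add: BetaF_def beta_rel_def)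

lemma in_lang_BetaF:
  assumes "arith_symbols \<subseteq> fst L" and "\<forall>t\<in>{a, b, i, z}. funs_t t \<subseteq> fst L"
  shows "in_lang L (BetaF a b i z)"
  using assms by (auto simp: BetaF_def in_lang_def LeF_def arith_symbols_def)

lemma (in Q_model) beta_rel_num:
  assumes "z \<in> dom M"
  shows "beta_rel M (q_num M a) (q_num M b) (q_num M i) z \<longleftrightarrow> z = q_num M (goedel_beta a b i)"
proof -
  define m where "m = Suc (Suc i * b)"
  have "q_suc M (q_times M (q_suc M (q_num M i)) (q_num M b)) = q_num M m"
    unfolding m_def by (simp del: q_num.simps add: q_num.simps(2)[symmetric])
  then have "beta_rel M (q_num M a) (q_num M b) (q_num M i) z \<longleftrightarrow> q_less M z (q_num M m) \<and>
      (\<exists>q\<in>dom M. q_le M q (q_num M a) \<and> q_plus M (q_times M q (q_num M m)) z = q_num M a)"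
    by (simp add: beta_rel_def)
  also have "\<dots> \<longleftrightarrow> z = q_num M (a mod m)"
  proof
    assume "q_less M z (q_num M m) \<and>
      (\<exists>q\<in>dom M. q_le M q (q_num M a) \<and> q_plus M (q_times M q (q_num M m)) z = q_num M a)"
    then obtain j q where j: "j < m" "z = q_num M j"
      and q: "q \<in> dom M" "q_le M q (q_num M a)" "q_plus M (q_times M q (q_num M m)) z = q_num M a"
      using less_num_imp_num[OF assms] by blast
    obtain q' where "q = q_num M q'" using le_num_imp_num[OF q(1,2)] by blast
    with q(3) j(2) have "q' * m + j = a" by simp
    with j show "z = q_num M (a mod m)" by auto
  next
    assume z: "z = q_num M (a mod m)"
    have "q_plus M (q_times M (q_num M (a div m)) (q_num M m)) z = q_num M a"
      using z by simp
    moreover have "q_le M (q_num M (a div m)) (q_num M a)" by (simp add: num_le_num)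
    moreover have "q_less M z (q_num M m)" using z num_less_num[of "a mod m" m] by (simp add: m_def)
    ultimately show "q_less M z (q_num M m) \<and>
      (\<exists>q\<in>dom M. q_le M q (q_num M a) \<and> q_plus M (q_times M q (q_num M m)) z = q_num M a)"
      using q_num_dom by blast
  qed
  finally show ?thesis by (simp add: goedel_beta_def m_def)
qed

section \<open>Definability in all models of a theory\<close>

text \<open>As in \<^const>\<open>represents\<close>, nothing is required where \<open>f\<close> is undefined.\<close>
definition defines_in :: "struc \<Rightarrow> fm \<Rightarrow> nat \<Rightarrow> (nat list \<Rightarrow> nat option) \<Rightarrow> bool" where
  "defines_in M p k f \<longleftrightarrow> (\<forall>xs y c d. length xs = k \<longrightarrow> f xs = Some y \<longrightarrow> c \<in> dom M \<longrightarrow> d \<in> dom M \<longrightarrow>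
      (sat M (arg_env (map (q_num M) xs) d c) p \<longleftrightarrow> d = q_num M y))"

definition model_of :: "fm set \<Rightarrow> struc \<Rightarrow> bool" where
  "model_of T M \<longleftrightarrow> Q_model M \<and> (\<forall>q\<in>T. valid_in M q)"

definition definable :: "lang \<Rightarrow> fm set \<Rightarrow> nat \<Rightarrow> (nat list \<Rightarrow> nat option) \<Rightarrow> bool" where
  "definable L T k f \<longleftrightarrow> (\<exists>p. in_lang L p \<and> (\<forall>M. model_of T M \<longrightarrow> defines_in M p k f))"

lemma defines_inD:
  "defines_in M p (length xs) f \<Longrightarrow> f xs = Some y \<Longrightarrow> c \<in> dom M \<Longrightarrow> d \<in> dom M \<Longrightarrow>
    sat M (arg_env (map (q_num M) xs) d c) p \<longleftrightarrow> d = q_num M y"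
  unfolding defines_in_def by blast

lemma definable_cong:
  assumes "definable L T k f" and "\<And>xs. length xs = k \<Longrightarrow> f' xs = f xs"
  shows "definable L T k f'"
  using assms unfolding definable_def defines_in_def by simp

lemma sat_inst: "sat M e (inst xs t p) = sat M (arg_env (map (q_num M) xs) (evalt M e t) (e 0)) p"
  unfolding inst_def by (rule sat_subst_env) (simp add: arg_env_def)

lemma sat_repr_sentence:
  "sat M e (repr_sentence p xs y) \<longleftrightarrow>
   (\<exists>d\<in>dom M. sat M (arg_env (map (q_num M) xs) d d) p \<and>
      (\<forall>d'\<in>dom M. sat M (arg_env (map (q_num M) xs) d' d') p \<longrightarrow> d' = d)) \<and>
   sat M (arg_env (map (q_num M) xs) (q_num M y) (e 0)) p"
  unfolding repr_sentence_def by (simp add: sat_inst)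

lemma fv_inst: "fv p \<subseteq> {..length xs} \<Longrightarrow> fv (inst xs t p) \<subseteq> fvt t"
  using fv_subst[of _ p] unfolding inst_def by (fastforce split: if_splits)

lemma sentence_repr_sentence: "fv p \<subseteq> {..length xs} \<Longrightarrow> sentence (repr_sentence p xs y)"
  using fv_inst[of p xs "Var 0"] fv_inst[of p xs "num y"]
  unfolding sentence_def repr_sentence_def by auto

lemma in_lang_repr_sentence:
  assumes "arith_symbols \<subseteq> fst L" and "in_lang L p"
  shows "in_lang L (repr_sentence p xs y)"
proof -
  have "in_lang L (inst xs t p)" if "funs_t t \<subseteq> fst L" for t
    unfolding inst_def using assms funs_t_num that by (intro in_lang_subst) auto
  then show ?thesis using assms funs_t_num[of y] by (simp add: repr_sentence_def in_lang_def)
qed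

lemma (in Q_model) valid_repr_sentence_defines:
  assumes fv: "fv p \<subseteq> {..length xs}" and valid: "valid_in M (repr_sentence p xs y)"
    and "c \<in> dom M" "d \<in> dom M"
  shows "sat M (arg_env (map (q_num M) xs) d c) p \<longleftrightarrow> d = q_num M y"
proof -
  let ?X = "map (q_num M) xs"
  have cong: "sat M (arg_env ?X u v) p = sat M (arg_env ?X u v') p" for u v v'
    using fv by (intro sat_arg_env_cong) simp
  from valid have "sat M (\<lambda>_. c) (repr_sentence p xs y)"
    using \<open>c \<in> dom M\<close> by (auto simp: valid_in_def)
  then obtain d0 where d0: "sat M (arg_env ?X d0 d0) p"
      and unique: "\<And>d'. d' \<in> dom M \<Longrightarrow> sat M (arg_env ?X d' d') p \<Longrightarrow> d' = d0"
      and y: "sat M (arg_env ?X (q_num M y) c) p"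
    unfolding sat_repr_sentence by blast
  have "q_num M y = d0"
    using unique[OF q_num_dom] y cong[of "q_num M y" c "q_num M y"] by simp
  moreover have "sat M (arg_env ?X d c) p \<longleftrightarrow> d = d0"
    using unique[OF \<open>d \<in> dom M\<close>] d0 cong[of d c d] cong[of d0 d0 c] by auto
  ultimately show ?thesis by simp
qed

lemma (in Q_model) defines_in_valid_repr_sentence:
  assumes "defines_in M p (length xs) f" and "f xs = Some y"
  shows "valid_in M (repr_sentence p xs y)"
  unfolding valid_in_def sat_repr_sentence
proof (intro allI impI conjI)
  fix e :: "nat \<Rightarrow> nat" assume "range e \<subseteq> dom M"
  then have "e 0 \<in> dom M" by auto
  with defines_inD[OF assms] show "sat M (arg_env (map (q_num M) xs) (q_num M y) (e 0)) p"
    by simp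
  show "\<exists>d\<in>dom M. sat M (arg_env (map (q_num M) xs) d d) p \<and>
      (\<forall>d'\<in>dom M. sat M (arg_env (map (q_num M) xs) d' d') p \<longrightarrow> d' = d)"
    using defines_inD[OF assms] q_num_dom by blast
qed

lemma represents_imp_definable:
  assumes "represents L T k f"
  shows "definable L T k f"
proof -
  obtain p where p: "in_lang L p" "fv p \<subseteq> {..k}"
    "\<And>xs y. length xs = k \<Longrightarrow> f xs = Some y \<Longrightarrow> repr_sentence p xs y \<in> T"
    using assms by (auto simp: represents_def)
  have "defines_in M p k f" if "model_of T M" for M
  proof -
    interpret Q_model M using that by (simp add: model_of_def)
    show ?thesis unfolding defines_in_def
      using valid_repr_sentence_defines p that by (auto simp: model_of_def)
  qed
  with p(1) show ?thesis unfolding definable_def by blast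
qed

text \<open>Variables beyond the value position are instantiated by \<open>0\<close>, which makes the
defining formula suitable for \<^const>\<open>represents\<close>.\<close>
lemma definable_by_bounded_formula:
  assumes "definable L T k f" and "(0, 0) \<in> fst L"
  obtains p where "in_lang L p" "fv p \<subseteq> {..k}" "\<And>M. model_of T M \<Longrightarrow> defines_in M p k f"
proof -
  obtain p where p: "in_lang L p" "\<And>M. model_of T M \<Longrightarrow> defines_in M p k f"
    using assms(1) unfolding definable_def by blast
  define p' where "p' = subst (\<lambda>i. if i \<le> k then Var i else Zero) p"
  have "fv p' \<subseteq> {..k}"
    using fv_subst[of _ p] unfolding p'_def by (fastforce simp: Zero_def split: if_splits)
  moreover have "in_lang L p'"
    unfolding p'_def using p(1) assms(2) by (intro in_lang_subst) auto
  moreover have "defines_in M p' k f" if "model_of T M" for M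
  proof -
    interpret Q_model M using that by (simp add: model_of_def)
    have "sat M (arg_env (map (q_num M) xs) d c) p' = sat M (arg_env (map (q_num M) xs) d (q_zero M)) p"
      if "length xs = k" for xs d c
      unfolding p'_def by (rule sat_subst_env) (use that in \<open>auto simp: arg_env_def\<close>)
    with p(2)[OF \<open>model_of T M\<close>] show ?thesis by (simp add: defines_in_def)
  qed
  ultimately show ?thesis using that by blast
qed

lemma extends_Q_arith_symbols:
  assumes "extends_Q L T"
  shows "arith_symbols \<subseteq> fst L"
proof -
  have "All (Neg (Eq (Sc (Var 0)) Zero)) \<in> Q_axioms" "All (Eq (Pl (Var 0) Zero) (Var 0)) \<in> Q_axioms"
    "All (Eq (Tm (Var 0) Zero) Zero) \<in> Q_axioms"
    unfolding Q_axioms_def by blast+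
  then have "in_lang L (All (Neg (Eq (Sc (Var 0)) Zero)))" "in_lang L (All (Eq (Pl (Var 0) Zero) (Var 0)))"
    "in_lang L (All (Eq (Tm (Var 0) Zero) Zero))"
    using assms unfolding extends_Q_def is_theory_def by blast+
  then show ?thesis by (simp add: in_lang_def arith_symbols_def)
qed

text \<open>Only here is the closure of \<open>T\<close> under consequence used.\<close>
lemma definable_imp_represents:
  assumes ext: "extends_Q L T" and "definable L T k f"
  shows "represents L T k f"
proof -
  have arith: "arith_symbols \<subseteq> fst L" using ext by (rule extends_Q_arith_symbols)
  then obtain p where p: "in_lang L p" "fv p \<subseteq> {..k}" "\<And>M. model_of T M \<Longrightarrow> defines_in M p k f"
    using definable_by_bounded_formula[OF assms(2)] by (auto simp: arith_symbols_def)
  have "repr_sentence p xs y \<in> T" if xs: "length xs = k" "f xs = Some y" for xs y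
  proof -
    have "conseq T (repr_sentence p xs y)"
      unfolding conseq_def
    proof (intro allI impI)
      fix M assume "is_struc M" "\<forall>q\<in>T. valid_in M q"
      with ext have "model_of T M"
        by (auto simp: model_of_def Q_model_def extends_Q_def)
      then show "valid_in M (repr_sentence p xs y)"
        using Q_model.defines_in_valid_repr_sentence[of M p xs f y] p(3) xs by (simp add: model_of_def)
    qed
    moreover have "sentence (repr_sentence p xs y)" using p(2) xs by (simp add: sentence_repr_sentence)
    moreover have "in_lang L (repr_sentence p xs y)" using arith p(1) by (rule in_lang_repr_sentence)
    ultimately show ?thesis using ext unfolding extends_Q_def is_theory_def by blast
  qed
  with p show ?thesis unfolding represents_def by blast
qed

section \<open>Formulas for composition, minimisation and primitive recursion\<close>

text \<open>The \<open>n\<close> intermediate values are quantified as variables \<open>0..<n\<close>; the arguments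
then sit at \<open>n..<n+k\<close> and the value at \<open>n+k\<close>.\<close>
definition CompF :: "nat \<Rightarrow> nat \<Rightarrow> fm \<Rightarrow> fm list \<Rightarrow> fm" where
  "CompF n k ph ps = Exs n (And
     (Conj (map (\<lambda>j. subst (\<lambda>i. if i < k then Var (n + i) else if i = k then Var j else Var (Suc (n + k)))
                         (ps ! j)) [0..<n]))
     (subst (\<lambda>i. if i < n then Var i else if i = n then Var (n + k) else Var (Suc (n + k))) ph))"

lemma sat_CompF:
  assumes "length X = k"
  shows "sat M (arg_env X d c) (CompF n k ph ps) \<longleftrightarrow>
    (\<exists>ds. length ds = n \<and> set ds \<subseteq> dom M \<and> (\<forall>j<n. sat M (arg_env X (ds ! j) c) (ps ! j)) \<and>
       sat M (arg_env ds d c) ph)"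
proof -
  have "sat M (prefix_env ds (arg_env X d c))
      (subst (\<lambda>i. if i < k then Var (n + i) else if i = k then Var j else Var (Suc (n + k))) (ps ! j))
     = sat M (arg_env X (ds ! j) c) (ps ! j)" if "length ds = n" "j < n" for ds j
    by (rule sat_subst_env) (use assms that in \<open>auto simp: prefix_env_def arg_env_def\<close>)
  moreover have "sat M (prefix_env ds (arg_env X d c))
      (subst (\<lambda>i. if i < n then Var i else if i = n then Var (n + k) else Var (Suc (n + k))) ph)
     = sat M (arg_env ds d c) ph" if "length ds = n" for ds
    by (rule sat_subst_env) (use assms that in \<open>auto simp: prefix_env_def arg_env_def\<close>)
  ultimately show ?thesis unfolding CompF_def sat_Exs by auto
qed

lemma in_lang_CompF: "in_lang L ph \<Longrightarrow> \<forall>q\<in>set ps. in_lang L q \<Longrightarrow> length ps = n \<Longrightarrow> in_lang L (CompF n k ph ps)"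
  unfolding CompF_def by (auto intro!: in_lang_subst split: if_split_asm)

lemma ex_list_of_unique_witnesses_iff:
  assumes "length vs = n" and "set vs \<subseteq> A"
    and unique: "\<And>j z. j < n \<Longrightarrow> z \<in> A \<Longrightarrow> P j z \<longleftrightarrow> z = vs ! j"
  shows "(\<exists>ds. length ds = n \<and> set ds \<subseteq> A \<and> (\<forall>j<n. P j (ds ! j)) \<and> Q ds) \<longleftrightarrow> Q vs"
proof
  assume "\<exists>ds. length ds = n \<and> set ds \<subseteq> A \<and> (\<forall>j<n. P j (ds ! j)) \<and> Q ds"
  then obtain ds where ds: "length ds = n" "set ds \<subseteq> A" "\<forall>j<n. P j (ds ! j)" and "Q ds"
    by blast
  moreover have "ds = vs"
    using ds assms(1) unique by (intro nth_equalityI) (auto simp: subset_iff)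
  ultimately show "Q vs" by simp
next
  assume "Q vs"
  moreover have "\<forall>j<n. P j (vs ! j)" using assms(1,2) unique nth_mem by blast
  ultimately show "\<exists>ds. length ds = n \<and> set ds \<subseteq> A \<and> (\<forall>j<n. P j (ds ! j)) \<and> Q ds"
    using assms(1,2) by blast
qed

lemma (in Q_model) defines_in_CompF:
  assumes ph: "defines_in M ph n h" and len: "length ps = n" "length hs = n"
    and ps: "\<And>j. j < n \<Longrightarrow> defines_in M (ps ! j) k (hs ! j)"
  shows "defines_in M (CompF n k ph ps) k
    (\<lambda>xs. if list_all (\<lambda>h'. h' xs \<noteq> None) hs then h (map (\<lambda>h'. the (h' xs)) hs) else None)"
  unfolding defines_in_def
proof (intro allI impI)
  fix xs y c d assume xs: "length xs = k" and fxs: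
    "(if list_all (\<lambda>h'. h' xs \<noteq> None) hs then h (map (\<lambda>h'. the (h' xs)) hs) else None) = Some y"
    and cd: "c \<in> dom M" "d \<in> dom M"
  let ?X = "map (q_num M) xs"
  define vs where "vs = map (\<lambda>h'. the (h' xs)) hs"
  have "list_all (\<lambda>h'. h' xs \<noteq> None) hs" and hy: "h vs = Some y"
    using fxs by (auto simp: vs_def split: if_splits)
  then have hv: "(hs ! j) xs = Some (vs ! j)" if "j < n" for j
    using that len by (auto simp: vs_def list_all_length)
  have lvs: "length vs = n" using len by (simp add: vs_def)
  have unique: "sat M (arg_env ?X z c) (ps ! j) \<longleftrightarrow> z = map (q_num M) vs ! j" if "j < n" "z \<in> dom M" for j z
    using defines_inD[of M "ps ! j" xs "hs ! j"] ps[OF that(1)] hv[OF that(1)] xs cd(1) that lvs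
    by simp
  have "sat M (arg_env ?X d c) (CompF n k ph ps) \<longleftrightarrow> sat M (arg_env (map (q_num M) vs) d c) ph"
    using xs lvs by (simp add: sat_CompF ex_list_of_unique_witnesses_iff[OF _ _ unique] image_subset_iff)
  also have "\<dots> \<longleftrightarrow> d = q_num M y"
    using defines_inD[of M ph vs] ph hy len cd by (simp add: vs_def)
  finally show "sat M (arg_env ?X d c) (CompF n k ph ps) \<longleftrightarrow> d = q_num M y" .
qed

lemma minim_SomeD:
  assumes "minim f xs = Some y"
  shows "f (y # xs) = Some 0" and "z < y \<Longrightarrow> \<exists>v. f (z # xs) = Some v \<and> v \<noteq> 0"
proof -
  define P where "P y \<longleftrightarrow> f (y # xs) = Some 0 \<and> (\<forall>z<y. f (z # xs) \<noteq> None)" for y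
  have md: "minim f xs = (if \<exists>y. P y then Some (LEAST y. P y) else None)"
    unfolding minim_def P_def by simp
  then have ex: "\<exists>y. P y" using assms by (metis option.distinct(1))
  then have y: "y = (LEAST y. P y)" using md assms by simp
  have Py: "P y" using LeastI_ex[OF ex] y by simp
  then show "f (y # xs) = Some 0" by (simp add: P_def)
  assume "z < y"
  then have "\<not> P z" using y not_less_Least by blast
  with Py \<open>z < y\<close> show "\<exists>v. f (z # xs) = Some v \<and> v \<noteq> 0" by (auto simp: P_def)
qed

text \<open>A nonstandard \<open>d\<close> lies above the standard root \<open>y\<close>, where the second conjunct fails.\<close>
lemma (in Q_model) least_root_unique:
  assumes "d \<in> dom M"
    and val: "\<And>j w. j \<le> y \<Longrightarrow> w \<in> dom M \<Longrightarrow> S (q_num M j) w \<longleftrightarrow> w = q_num M (v j)"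
    and root: "v y = 0" and nonroot: "\<And>j. j < y \<Longrightarrow> v j \<noteq> 0"
  shows "S d (q_zero M) \<and> (\<forall>z\<in>dom M. q_less M z d \<longrightarrow> (\<exists>w\<in>dom M. S z w \<and> w \<noteq> q_zero M))
    \<longleftrightarrow> d = q_num M y"
proof
  assume d: "d = q_num M y"
  have "\<exists>w\<in>dom M. S z w \<and> w \<noteq> q_zero M" if z: "z \<in> dom M" "q_less M z d" for z
  proof -
    obtain j where j: "j < y" "z = q_num M j" using less_num_imp_num[of z y] z d by blast
    then have "S z (q_num M (v j))" using val[of j "q_num M (v j)"] by simp
    moreover have "q_num M (v j) \<noteq> q_zero M" using nonroot[OF j(1)] q_num_inj[of "v j" 0] by simp
    ultimately show ?thesis using q_num_dom by blast
  qed
  moreover have "S d (q_zero M)" using val[of y "q_zero M"] root d by simp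
  ultimately show "S d (q_zero M) \<and> (\<forall>z\<in>dom M. q_less M z d \<longrightarrow> (\<exists>w\<in>dom M. S z w \<and> w \<noteq> q_zero M))"
    by blast
next
  assume "S d (q_zero M) \<and> (\<forall>z\<in>dom M. q_less M z d \<longrightarrow> (\<exists>w\<in>dom M. S z w \<and> w \<noteq> q_zero M))"
  then have zero: "S d (q_zero M)"
    and above: "\<And>z. z \<in> dom M \<Longrightarrow> q_less M z d \<Longrightarrow> \<exists>w\<in>dom M. S z w \<and> w \<noteq> q_zero M"
    by blast+
  have "\<not> q_less M (q_num M y) d"
  proof
    assume "q_less M (q_num M y) d"
    then obtain w where "w \<in> dom M" "S (q_num M y) w" "w \<noteq> q_zero M"
      using above[OF q_num_dom] by blast
    with val[of y w] root show False by simp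
  qed
  moreover have "d \<noteq> q_num M j" if "j < y" for j
  proof
    assume "d = q_num M j"
    with zero val[of j "q_zero M"] that have "q_zero M = q_num M (v j)" by simp
    with nonroot[OF that] show False using q_num_inj[of 0 "v j"] by simp
  qed
  ultimately show "d = q_num M y"
    using below_or_above_num[OF assms(1), of y] num_le_imp_eq_or_less by blast
qed

definition MinF :: "nat \<Rightarrow> fm \<Rightarrow> fm" where
  "MinF k p = And
     (subst (\<lambda>i. if i = 0 then Var k else if i \<le> k then Var (i - 1) else if i = Suc k then Zero else Var (Suc k)) p)
     (All (Imp (LtF (Var 0) (Var (Suc k)))
        (Ex (And (subst (\<lambda>i. if i = 0 then Var 1 else if i \<le> k then Var (Suc i)
                           else if i = Suc k then Var 0 else Var (Suc (Suc (Suc k)))) p)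
                 (Neg (Eq (Var 0) Zero))))))"

lemma sat_MinF:
  assumes "length X = k"
  shows "sat M (arg_env X d c) (MinF k p) \<longleftrightarrow> sat M (arg_env (d # X) (q_zero M) c) p \<and>
    (\<forall>z\<in>dom M. q_less M z d \<longrightarrow> (\<exists>w\<in>dom M. sat M (arg_env (z # X) w c) p \<and> w \<noteq> q_zero M))"
proof -
  have "sat M (arg_env X d c) (subst (\<lambda>i. if i = 0 then Var k else if i \<le> k then Var (i - 1)
      else if i = Suc k then Zero else Var (Suc k)) p) = sat M (arg_env (d # X) (q_zero M) c) p"
    by (rule sat_subst_env) (use assms in \<open>auto simp: arg_env_def nth_Cons'\<close>)
  moreover have "sat M (cons_env w (cons_env z (arg_env X d c))) (subst (\<lambda>i. if i = 0 then Var 1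
      else if i \<le> k then Var (Suc i) else if i = Suc k then Var 0 else Var (Suc (Suc (Suc k)))) p)
     = sat M (arg_env (z # X) w c) p" for w z
    by (rule sat_subst_env)
      (use assms in \<open>auto simp: arg_env_def nth_Cons' cons_env_def split: nat.split\<close>)
  moreover have "arg_env X d c k = d"
    using assms by (simp add: arg_env_def)
  ultimately show ?thesis unfolding MinF_def by simp
qed

lemma in_lang_MinF: "arith_symbols \<subseteq> fst L \<Longrightarrow> in_lang L p \<Longrightarrow> in_lang L (MinF k p)"
  unfolding MinF_def by (auto intro!: in_lang_subst simp: arith_symbols_def split: if_split_asm)

lemma (in Q_model) defines_in_MinF:
  assumes p: "defines_in M p (Suc k) f"
  shows "defines_in M (MinF k p) k (minim f)"
  unfolding defines_in_def
proof (intro allI impI)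
  fix xs y c d assume xs: "length xs = k" and y: "minim f xs = Some y" and cd: "c \<in> dom M" "d \<in> dom M"
  define v where "v j = the (f (j # xs))" for j
  have fv: "f (j # xs) = Some (v j)" if "j \<le> y" for j
  proof (cases "j = y")
    case False
    with that obtain w where "f (j # xs) = Some w" using minim_SomeD(2)[OF y, of j] by auto
    then show ?thesis by (simp add: v_def)
  qed (use minim_SomeD(1)[OF y] in \<open>simp add: v_def\<close>)
  let ?S = "\<lambda>a b. sat M (arg_env (a # map (q_num M) xs) b c) p"
  have "sat M (arg_env (map (q_num M) xs) d c) (MinF k p) \<longleftrightarrow>
      ?S d (q_zero M) \<and> (\<forall>z\<in>dom M. q_less M z d \<longrightarrow> (\<exists>w\<in>dom M. ?S z w \<and> w \<noteq> q_zero M))"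
    using xs by (simp add: sat_MinF)
  also have "\<dots> \<longleftrightarrow> d = q_num M y"
  proof (rule least_root_unique[OF cd(2)])
    show "?S (q_num M j) w \<longleftrightarrow> w = q_num M (v j)" if "j \<le> y" "w \<in> dom M" for j w
      using defines_inD[of M p "j # xs"] p xs fv[OF that(1)] cd(1) that(2) by simp
    show "v y = 0" using minim_SomeD(1)[OF y] by (simp add: v_def)
    show "v j \<noteq> 0" if "j < y" for j using minim_SomeD(2)[OF y that] by (auto simp: v_def)
  qed
  finally show "sat M (arg_env (map (q_num M) xs) d c) (MinF k p) \<longleftrightarrow> d = q_num M y" .
qed

definition prec_trace ::
  "struc \<Rightarrow> (nat \<Rightarrow> bool) \<Rightarrow> (nat \<Rightarrow> nat \<Rightarrow> nat \<Rightarrow> bool) \<Rightarrow> nat \<Rightarrow> nat \<Rightarrow> nat \<Rightarrow> bool" where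
  "prec_trace M B S n a b \<longleftrightarrow>
     (\<forall>z\<in>dom M. beta_rel M a b (q_zero M) z \<longrightarrow> B z) \<and>
     (\<forall>i\<in>dom M. q_less M i n \<longrightarrow> (\<forall>z\<in>dom M. \<forall>z'\<in>dom M.
        beta_rel M a b i z \<and> beta_rel M a b (q_suc M i) z' \<longrightarrow> S i z z')) \<and>
     (\<forall>i\<in>dom M. q_le M i n \<longrightarrow> (\<exists>z\<in>dom M. beta_rel M a b i z))"

lemma (in Q_model) prec_trace_unique:
  assumes trace: "prec_trace M B S (q_num M N) a b"
    and base: "\<And>z. z \<in> dom M \<Longrightarrow> B z \<Longrightarrow> z = q_num M (v 0)"
    and step: "\<And>j z'. j < N \<Longrightarrow> z' \<in> dom M \<Longrightarrow> S (q_num M j) (q_num M (v j)) z' \<Longrightarrow>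
      z' = q_num M (v (Suc j))"
  shows "j \<le> N \<Longrightarrow> z \<in> dom M \<Longrightarrow> beta_rel M a b (q_num M j) z \<Longrightarrow> z = q_num M (v j)"
proof (induction j arbitrary: z)
  case 0
  then show ?case using trace base by (simp add: prec_trace_def)
next
  case (Suc j)
  then have "j < N" by simp
  then obtain z0 where z0: "z0 \<in> dom M" "beta_rel M a b (q_num M j) z0"
    using trace num_le_num[of j N] q_num_dom by (auto simp: prec_trace_def)
  with Suc.IH \<open>j < N\<close> have "z0 = q_num M (v j)" by simp
  with z0 Suc.prems trace num_less_num[OF \<open>j < N\<close>] have "S (q_num M j) (q_num M (v j)) z"
    by (auto simp: prec_trace_def)
  with step[OF \<open>j < N\<close>] Suc.prems(2) show ?case by blast
qed

lemma (in Q_model) prec_trace_exists: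
  assumes base: "B (q_num M (v 0))"
    and step: "\<And>j. j < N \<Longrightarrow> S (q_num M j) (q_num M (v j)) (q_num M (v (Suc j)))"
  shows "\<exists>a\<in>dom M. \<exists>b\<in>dom M. prec_trace M B S (q_num M N) a b \<and>
    beta_rel M a b (q_num M N) (q_num M (v N))"
proof -
  obtain a b where ab: "\<forall>j\<le>N. goedel_beta a b j = v j"
    using goedel_beta_codes_sequence by blast
  have beta: "beta_rel M (q_num M a) (q_num M b) (q_num M j) z \<longleftrightarrow> z = q_num M (v j)"
    if "j \<le> N" "z \<in> dom M" for j z
    using beta_rel_num[OF that(2)] ab that(1) by simp
  have "prec_trace M B S (q_num M N) (q_num M a) (q_num M b)"
    unfolding prec_trace_def
  proof (intro conjI ballI impI)
    fix z assume "z \<in> dom M" "beta_rel M (q_num M a) (q_num M b) (q_zero M) z"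
    then show "B z" using beta[of 0 z] base by simp
  next
    fix i z z' assume i: "i \<in> dom M" "q_less M i (q_num M N)" and z: "z \<in> dom M" "z' \<in> dom M"
      and "beta_rel M (q_num M a) (q_num M b) i z \<and> beta_rel M (q_num M a) (q_num M b) (q_suc M i) z'"
    moreover obtain j where "j < N" "i = q_num M j" using less_num_imp_num[OF i] by blast
    ultimately show "S i z z'" using beta[of j z] beta[of "Suc j" z'] step by simp
  next
    fix i assume "i \<in> dom M" "q_le M i (q_num M N)"
    then obtain j where "j \<le> N" "i = q_num M j" using le_num_imp_num by blast
    then show "\<exists>z\<in>dom M. beta_rel M (q_num M a) (q_num M b) i z" using beta q_num_dom by blast
  qed
  moreover have "beta_rel M (q_num M a) (q_num M b) (q_num M N) (q_num M (v N))"
    using beta by simp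
  ultimately show ?thesis using q_num_dom by blast
qed

lemma (in Q_model) prec_trace_iff:
  assumes "d \<in> dom M"
    and base: "\<And>z. z \<in> dom M \<Longrightarrow> B z \<longleftrightarrow> z = q_num M (v 0)"
    and step: "\<And>j z. j < N \<Longrightarrow> z \<in> dom M \<Longrightarrow> S (q_num M j) (q_num M (v j)) z \<longleftrightarrow> z = q_num M (v (Suc j))"
  shows "(\<exists>a\<in>dom M. \<exists>b\<in>dom M. prec_trace M B S (q_num M N) a b \<and> beta_rel M a b (q_num M N) d)
    \<longleftrightarrow> d = q_num M (v N)"
proof
  assume "\<exists>a\<in>dom M. \<exists>b\<in>dom M. prec_trace M B S (q_num M N) a b \<and> beta_rel M a b (q_num M N) d"
  then obtain a b where "prec_trace M B S (q_num M N) a b" "beta_rel M a b (q_num M N) d"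
    by blast
  with prec_trace_unique[of B S N a b v N d] base step \<open>d \<in> dom M\<close> show "d = q_num M (v N)"
    by blast
next
  assume "d = q_num M (v N)"
  with prec_trace_exists[of B v N S] base step show
    "\<exists>a\<in>dom M. \<exists>b\<in>dom M. prec_trace M B S (q_num M N) a b \<and> beta_rel M a b (q_num M N) d"
    by simp
qed

text \<open>The variables bound by \<open>Ex\<close> and \<open>All\<close> inside \<open>RecF k pb ps\<close> are the code \<open>a, b\<close>
of the computation sequence, an index \<open>i\<close> and the values \<open>z, z'\<close> at \<open>i\<close> and \<open>i + 1\<close>.\<close>
definition RecF :: "nat \<Rightarrow> fm \<Rightarrow> fm \<Rightarrow> fm" where
  "RecF k pb ps = Ex (Ex (Conj [
     All (Imp (BetaF (Var 2) (Var 1) Zero (Var 0))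
       (subst (\<lambda>i. if i < k then Var (i + 4) else if i = k then Var 0 else Var (k + 5)) pb)),
     All (Imp (LtF (Var 0) (Var 3))
       (All (All (Imp (And (BetaF (Var 4) (Var 3) (Var 2) (Var 1)) (BetaF (Var 4) (Var 3) (Sc (Var 2)) (Var 0)))
          (subst (\<lambda>i. if i = 0 then Var 2 else if i = 1 then Var 1 else if i < k + 2 then Var (i + 4)
                    else if i = k + 2 then Var 0 else Var (k + 7)) ps))))),
     All (Imp (LeF (Var 0) (Var 3)) (Ex (BetaF (Var 3) (Var 2) (Var 1) (Var 0)))),
     BetaF (Var 1) (Var 0) (Var 2) (Var (k + 3))]))"

lemma sat_RecF:
  assumes "length X = k"
  shows "sat M (arg_env (N # X) d c) (RecF k pb ps) \<longleftrightarrow>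
    (\<exists>a\<in>dom M. \<exists>b\<in>dom M. prec_trace M (\<lambda>z. sat M (arg_env X z c) pb)
        (\<lambda>i z z'. sat M (arg_env (i # z # X) z' c) ps) N a b \<and> beta_rel M a b N d)"
proof -
  let ?E = "arg_env (N # X) d c"
  have "sat M (cons_env z (cons_env b (cons_env a ?E)))
      (subst (\<lambda>i. if i < k then Var (i + 4) else if i = k then Var 0 else Var (k + 5)) pb)
     = sat M (arg_env X z c) pb" for z b a
    by (rule sat_subst_env) (use assms in \<open>auto simp: arg_env_def eval_nat_numeral\<close>)
  moreover have "sat M (cons_env z' (cons_env z (cons_env i (cons_env b (cons_env a ?E)))))
      (subst (\<lambda>i. if i = 0 then Var 2 else if i = 1 then Var 1 else if i < k + 2 then Var (i + 4)
                    else if i = k + 2 then Var 0 else Var (k + 7)) ps)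
     = sat M (arg_env (i # z # X) z' c) ps" for z' z i b a
    by (rule sat_subst_env)
      (use assms in \<open>auto simp: arg_env_def nth_Cons' cons_env_def eval_nat_numeral split: nat.split\<close>)
  moreover have "?E 0 = N" "?E (k + 1) = d"
    using assms by (simp_all add: arg_env_def)
  ultimately show ?thesis
    unfolding RecF_def prec_trace_def by (simp add: eval_nat_numeral)
qed

lemma in_lang_RecF:
  assumes "arith_symbols \<subseteq> fst L" and "in_lang L pb" and "in_lang L ps"
  shows "in_lang L (RecF k pb ps)"
proof -
  have "in_lang L (BetaF s t u w)" if "{s, t, u, w} \<subseteq> {Zero} \<union> range Var \<union> Sc ` range Var" for s t u w
    using assms(1) that by (intro in_lang_BetaF) (auto simp: arith_symbols_def)
  then show ?thesis
    using assms unfolding RecF_def by (auto intro!: in_lang_subst simp: arith_symbols_def split: if_split_asm)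
qed

lemma prec_defined_below: "prec b s N xs = Some y \<Longrightarrow> j \<le> N \<Longrightarrow> prec b s j xs \<noteq> None"
proof (induction N arbitrary: y)
  case (Suc N)
  then show ?case by (cases "j = Suc N") (auto split: option.splits simp: le_Suc_eq)
qed simp

lemma (in Q_model) defines_in_RecF:
  assumes pb: "defines_in M pb k b" and ps: "defines_in M ps (Suc (Suc k)) s"
  shows "defines_in M (RecF k pb ps) (Suc k) (\<lambda>ys. prec b s (hd ys) (tl ys))"
  unfolding defines_in_def
proof (intro allI impI)
  fix ys y c d
  assume ys: "length ys = Suc k" and y: "prec b s (hd ys) (tl ys) = Some y" and cd: "c \<in> dom M" "d \<in> dom M"
  obtain N xs where ys_eq: "ys = N # xs" and xs: "length xs = k" using ys by (cases ys) auto
  let ?X = "map (q_num M) xs"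
  define v where "v j = the (prec b s j xs)" for j
  have pv: "prec b s j xs = Some (v j)" if "j \<le> N" for j
    using prec_defined_below[of b s N xs y j] y ys_eq that by (auto simp: v_def)
  have base: "sat M (arg_env ?X z c) pb \<longleftrightarrow> z = q_num M (v 0)" if "z \<in> dom M" for z
    using defines_inD[of M pb xs b] pb xs pv[of 0] cd(1) that by simp
  have step: "sat M (arg_env (q_num M j # q_num M (v j) # ?X) z c) ps \<longleftrightarrow> z = q_num M (v (Suc j))"
    if "j < N" "z \<in> dom M" for j z
    using defines_inD[of M ps "j # v j # xs" s] ps xs pv[of j] pv[of "Suc j"] cd(1) that by simp
  have "sat M (arg_env (map (q_num M) ys) d c) (RecF k pb ps) \<longleftrightarrow>
      (\<exists>a\<in>dom M. \<exists>b\<in>dom M. prec_trace M (\<lambda>z. sat M (arg_env ?X z c) pb)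
        (\<lambda>i z z'. sat M (arg_env (i # z # ?X) z' c) ps) (q_num M N) a b \<and> beta_rel M a b (q_num M N) d)"
    using ys_eq xs by (simp add: sat_RecF)
  also have "\<dots> \<longleftrightarrow> d = q_num M (v N)"
    using cd(2) base step by (rule prec_trace_iff)
  finally show "sat M (arg_env (map (q_num M) ys) d c) (RecF k pb ps) \<longleftrightarrow> d = q_num M y"
    using pv[of N] y ys_eq by simp
qed

section \<open>Functions computable relative to \<open>g\<close> are definable\<close>

context
  fixes L :: lang and T :: "fm set"
  assumes arith: "arith_symbols \<subseteq> fst L"
begin

lemma definable_zero: "definable L T k (\<lambda>xs. Some 0)"
proof -
  have "defines_in M (Eq (Var k) Zero) k (\<lambda>xs. Some 0)" for M
    by (simp add: defines_in_def arg_env_def)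
  moreover have "in_lang L (Eq (Var k) Zero)" using arith by (simp add: arith_symbols_def)
  ultimately show ?thesis unfolding definable_def by blast
qed

lemma definable_succ: "definable L T 1 (\<lambda>xs. Some (Suc (hd xs)))"
proof -
  have "defines_in M (Eq (Var 1) (Sc (Var 0))) 1 (\<lambda>xs. Some (Suc (hd xs)))" for M
    unfolding defines_in_def
  proof (intro allI impI)
    fix xs y c d assume "length xs = 1" "Some (Suc (hd xs)) = Some y"
    then obtain x where "xs = [x]" "y = Suc x" by (cases xs) auto
    then show "sat M (arg_env (map (q_num M) xs) d c) (Eq (Var 1) (Sc (Var 0))) \<longleftrightarrow> d = q_num M y"
      by (simp add: arg_env_def)
  qed
  moreover have "in_lang L (Eq (Var 1) (Sc (Var 0)))" using arith by (simp add: arith_symbols_def)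
  ultimately show ?thesis unfolding definable_def by blast
qed

lemma definable_proj: "i < k \<Longrightarrow> definable L T k (\<lambda>xs. Some (xs ! i))"
  unfolding definable_def defines_in_def
  by (intro exI[of _ "Eq (Var k) (Var i)"]) (simp add: arg_env_def)

lemma definable_comp:
  assumes h: "definable L T n h" and len: "length hs = n" and hs: "list_all (definable L T k) hs"
  shows "definable L T k
    (\<lambda>xs. if list_all (\<lambda>h'. h' xs \<noteq> None) hs then h (map (\<lambda>h'. the (h' xs)) hs) else None)"
proof -
  obtain ph where ph: "in_lang L ph" "\<And>M. model_of T M \<Longrightarrow> defines_in M ph n h"
    using h unfolding definable_def by blast
  have "\<forall>j<n. \<exists>p. in_lang L p \<and> (\<forall>M. model_of T M \<longrightarrow> defines_in M p k (hs ! j))"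
    using hs len by (simp add: list_all_length definable_def)
  then obtain ps where ps: "length ps = n"
    "\<And>j. j < n \<Longrightarrow> in_lang L (ps ! j) \<and> (\<forall>M. model_of T M \<longrightarrow> defines_in M (ps ! j) k (hs ! j))"
    unfolding Skolem_list_nth by blast
  have "in_lang L (CompF n k ph ps)"
    using ph(1) ps by (intro in_lang_CompF) (auto simp: in_set_conv_nth)
  moreover have "defines_in M (CompF n k ph ps) k
      (\<lambda>xs. if list_all (\<lambda>h'. h' xs \<noteq> None) hs then h (map (\<lambda>h'. the (h' xs)) hs) else None)"
    if "model_of T M" for M
    using that ph ps len Q_model.defines_in_CompF[of M ph n h ps hs k] by (simp add: model_of_def)
  ultimately show ?thesis unfolding definable_def by blast
qed

lemma definable_prec:
  assumes "definable L T k b" and "definable L T (Suc (Suc k)) s"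
  shows "definable L T (Suc k) (\<lambda>ys. prec b s (hd ys) (tl ys))"
proof -
  obtain pb where pb: "in_lang L pb" "\<And>M. model_of T M \<Longrightarrow> defines_in M pb k b"
    using assms(1) unfolding definable_def by blast
  obtain ps where ps: "in_lang L ps" "\<And>M. model_of T M \<Longrightarrow> defines_in M ps (Suc (Suc k)) s"
    using assms(2) unfolding definable_def by blast
  have "defines_in M (RecF k pb ps) (Suc k) (\<lambda>ys. prec b s (hd ys) (tl ys))" if "model_of T M" for M
    using that pb(2) ps(2) Q_model.defines_in_RecF unfolding model_of_def by blast
  with in_lang_RecF[OF arith pb(1) ps(1)] show ?thesis unfolding definable_def by blast
qed

lemma definable_minim:
  assumes "definable L T (Suc k) f"
  shows "definable L T k (minim f)"
proof -
  obtain p where p: "in_lang L p" "\<And>M. model_of T M \<Longrightarrow> defines_in M p (Suc k) f"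
    using assms unfolding definable_def by blast
  have "defines_in M (MinF k p) k (minim f)" if "model_of T M" for M
    using that p(2) Q_model.defines_in_MinF unfolding model_of_def by blast
  with in_lang_MinF[OF arith p(1)] show ?thesis unfolding definable_def by blast
qed

lemma definable_orec:
  assumes "definable L T m g" and "orec m g k f"
  shows "definable L T k f"
  using assms(2)
proof (induction rule: orec.induct)
  case (zero k) show ?case by (rule definable_zero)
next
  case succ show ?case by (rule definable_succ)
next
  case (proj i k) then show ?case by (rule definable_proj)
next
  case query show ?case by (rule assms(1))
next
  case (comp n h hs k)
  have "list_all (definable L T k) hs" using comp.IH(2) by (simp add: list_all_iff)
  with comp.IH(1) comp.hyps(2) show ?case by (rule definable_comp)
next
  case (prim_rec k b s) from prim_rec.IH show ?case by (rule definable_prec)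
next
  case (mu k f) from mu.IH show ?case by (rule definable_minim)
next
  case (ext k f f') with definable_cong show ?case by blast
qed

end

theorem mainTheorem19:
  fixes L :: lang and T :: "fm set"
    and m :: nat and g :: "nat list \<Rightarrow> nat option"
    and k :: nat and f :: "nat list \<Rightarrow> nat option"
  assumes "extends_Q L T"
    and "represents L T m g"
    and "orec m g k f"
  shows "represents L T k f"
proof -
  have "arith_symbols \<subseteq> fst L" using assms(1) by (rule extends_Q_arith_symbols)
  then have "definable L T k f"
    using represents_imp_definable[OF assms(2)] assms(3) by (rule definable_orec)
  with assms(1) show ?thesis by (rule definable_imp_represents)
qed

end
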